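(* Let $(f,L)$ satisfy the usual conditions and let $\Omega^\star=\{\liminf_{t\to\infty}Z(t)>0\}$. If $S>0$, then $\mathbb P$-almost surely on $\Omega^\star$, \[\liminf_{t\to\infty}\frac{\log|\hat N(t)|}{\int_0^t\big(r-\frac12f'(s)^2-\frac{\pi^2}{8L(s)^2}+\frac{L'(s)}{2L(s)}\big)ds}\ge1.\]
   Context: Branching Brownian motion (BBM) with branching rate $r>0$: under $\mathbb P$ we start with a single particle at $0$; each particle moves as a standard one-dimensional Brownian motion independently of all others, lives for an independent exponential time with parameter $r$, and then is replaced by two children at its current position, which evolve independently in the same way. $N(t)$ is the set of particles alive at time $t$; for $u\in N(t)$ and $s\le t$, $X_u(s)$ denotes the position at time $s$ of $u$ or of its ancestor alive at time $s$. Given continuous $f:[0,\infty)\to\mathbb R$ and $L:[0,\infty)\to(0,\infty)$, let $\hat N(t)=\{u\in N(t): |X_u(s)-f(s)|<L(s)\ \forall s\le t\}$. When $f,L$ are twice continuously differentiable, set $E(t)=|f'(t)|L(t)+\int_0^t|f''(s)|L(s)ds+\frac12|L'(t)|L(t)+\frac12\int_0^t|L''(s)|L(s)ds$ and $S=\liminf_{t\to\infty}\frac1t\int_0^t\big(r-\frac12 f'(s)^2-\frac{\pi^2}{8L(s)^2}+\frac{L'(s)}{2L(s)}\big)ds$. The pair $(f,L)$ satisfies the usual conditions if (I) $f(0)=0$; (II) $f$ and $L$ are twice continuously differentiable; (III) $E(t)/t\to0$; (IV) $S\in(-\infty,\infty)$. For $u\in N(t)$ define $G_u(t)=\exp\Big(\int_0^t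 f'(s)dX_u(s)-\frac12\int_0^t f'(s)^2ds+\int_0^t\frac{\pi^2}{8L(s)^2}ds+\frac{L'(t)}{2L(t)}(X_u(t)-f(t))^2-\int_0^t\big(\frac{L''(s)}{2L(s)}(X_u(s)-f(s))^2+\frac{L'(s)}{2L(s)}\big)ds\Big)$, $\zeta_u(t)=G_u(t)\cos\big(\frac{\pi}{2L(t)}(X_u(t)-f(t))\big)\mathbf 1_{\{|X_u(s)-f(s)|<L(s)\ \forall s\le t\}}$, and $Z(t)=\sum_{u\in N(t)}e^{-rt}\zeta_u(t)$. *)

theory Defs
  imports "HOL-Probability.Probability"
begin

definition std_BM :: "'w measure \<Rightarrow> (real \<Rightarrow> 'w \<Rightarrow> real) \<Rightarrow> bool" where
  "std_BM M W \<longleftrightarrow>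
     (\<forall>s\<ge>0. W s \<in> borel_measurable M) \<and>
     (\<forall>\<omega>\<in>space M. W 0 \<omega> = 0 \<and> continuous_on {0..} (\<lambda>s. W s \<omega>)) \<and>
     (\<forall>s t. 0 \<le> s \<and> s < t \<longrightarrow>
        distributed M lborel (\<lambda>\<omega>. W t \<omega> - W s \<omega>)
          (\<lambda>x. ennreal (normal_density 0 (sqrt (t - s)) x))) \<and>
     (\<forall>ts :: real list. sorted_wrt (<) ts \<and> (\<forall>t\<in>set ts. 0 \<le> t) \<longrightarrow>
        prob_space.indep_vars M (\<lambda>_. borel)
          (\<lambda>i \<omega>. W (ts ! Suc i) \<omega> - W (ts ! i) \<omega>) {..<length ts - 1})"

definition gen_sigma :: "'w measure \<Rightarrow> (real \<Rightarrow> 'w \<Rightarrow> real) \<Rightarrow> 'w set set" where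
  "gen_sigma M V = sigma_sets (space M)
     (\<Union>s\<in>{0..}. {V s -` A \<inter> space M | A. A \<in> sets borel})"

text \<open>Ulam--Harris construction of BBM. Particles are labelled by bool lists;
  label u has lifetime E u and driving Brownian motion B u.
  Birth time of u = sum of lifetimes of its strict ancestors.\<close>
definition born :: "(bool list \<Rightarrow> 'w \<Rightarrow> real) \<Rightarrow> bool list \<Rightarrow> 'w \<Rightarrow> real" where
  "born E u \<omega> = (\<Sum>j<length u. E (take j u) \<omega>)"

definition death :: "(bool list \<Rightarrow> 'w \<Rightarrow> real) \<Rightarrow> bool list \<Rightarrow> 'w \<Rightarrow> real" where
  "death E u \<omega> = born E u \<omega> + E u \<omega>"

definition alive :: "(bool list \<Rightarrow> 'w \<Rightarrow> real) \<Rightarrow> real \<Rightarrow> 'w \<Rightarrow> bool list set" where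
  "alive E t \<omega> = {u. born E u \<omega> \<le> t \<and> t < death E u \<omega>}"

text \<open>X_u(s): position at time s of u or of its ancestor alive at time s
  (meaningful for 0 \<le> s < death of u).\<close>
definition pos :: "(bool list \<Rightarrow> 'w \<Rightarrow> real) \<Rightarrow> (bool list \<Rightarrow> real \<Rightarrow> 'w \<Rightarrow> real)
    \<Rightarrow> bool list \<Rightarrow> real \<Rightarrow> 'w \<Rightarrow> real" where
  "pos E B u s \<omega> = (\<Sum>j\<in>{0..length u}.
      B (take j u) (min (E (take j u) \<omega>) (max 0 (s - born E (take j u) \<omega>))) \<omega>)"

definition tube_alive :: "(bool list \<Rightarrow> 'w \<Rightarrow> real) \<Rightarrow> (bool list \<Rightarrow> real \<Rightarrow> 'w \<Rightarrow> real)
    \<Rightarrow> (real \<Rightarrow> real) \<Rightarrow> (real \<Rightarrow> real) \<Rightarrow> real \<Rightarrow> 'w \<Rightarrow> bool list set" where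
  "tube_alive E B f L t \<omega> = {u \<in> alive E t \<omega>.
      \<forall>s\<in>{0..t}. \<bar>pos E B u s \<omega> - f s\<bar> < L s}"

text \<open>log G_u(t). The stochastic integral of the deterministic C^1 integrand f'
  against X_u is written pathwise via integration by parts (X_u(0)=0).\<close>
definition logG :: "(bool list \<Rightarrow> 'w \<Rightarrow> real) \<Rightarrow> (bool list \<Rightarrow> real \<Rightarrow> 'w \<Rightarrow> real)
    \<Rightarrow> (real \<Rightarrow> real) \<Rightarrow> (real \<Rightarrow> real) \<Rightarrow> (real \<Rightarrow> real)
    \<Rightarrow> (real \<Rightarrow> real) \<Rightarrow> (real \<Rightarrow> real) \<Rightarrow> (real \<Rightarrow> real)
    \<Rightarrow> bool list \<Rightarrow> real \<Rightarrow> 'w \<Rightarrow> real" where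
  "logG E B f f' f'' L L' L'' u t \<omega> =
     (let X = (\<lambda>s. pos E B u s \<omega>) in
       (f' t * X t - integral {0..t} (\<lambda>s. f'' s * X s))
       - 1/2 * integral {0..t} (\<lambda>s. (f' s)\<^sup>2)
       + integral {0..t} (\<lambda>s. pi\<^sup>2 / (8 * (L s)\<^sup>2))
       + L' t / (2 * L t) * (X t - f t)\<^sup>2
       - integral {0..t} (\<lambda>s. L'' s / (2 * L s) * (X s - f s)\<^sup>2 + L' s / (2 * L s)))"

definition zeta :: "(bool list \<Rightarrow> 'w \<Rightarrow> real) \<Rightarrow> (bool list \<Rightarrow> real \<Rightarrow> 'w \<Rightarrow> real)
    \<Rightarrow> (real \<Rightarrow> real) \<Rightarrow> (real \<Rightarrow> real) \<Rightarrow> (real \<Rightarrow> real)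
    \<Rightarrow> (real \<Rightarrow> real) \<Rightarrow> (real \<Rightarrow> real) \<Rightarrow> (real \<Rightarrow> real)
    \<Rightarrow> bool list \<Rightarrow> real \<Rightarrow> 'w \<Rightarrow> real" where
  "zeta E B f f' f'' L L' L'' u t \<omega> =
     exp (logG E B f f' f'' L L' L'' u t \<omega>)
     * cos (pi / (2 * L t) * (pos E B u t \<omega> - f t))
     * (if \<forall>s\<in>{0..t}. \<bar>pos E B u s \<omega> - f s\<bar> < L s then 1 else 0)"

definition Zmart :: "real \<Rightarrow> (bool list \<Rightarrow> 'w \<Rightarrow> real) \<Rightarrow> (bool list \<Rightarrow> real \<Rightarrow> 'w \<Rightarrow> real)
    \<Rightarrow> (real \<Rightarrow> real) \<Rightarrow> (real \<Rightarrow> real) \<Rightarrow> (real \<Rightarrow> real)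
    \<Rightarrow> (real \<Rightarrow> real) \<Rightarrow> (real \<Rightarrow> real) \<Rightarrow> (real \<Rightarrow> real)
    \<Rightarrow> real \<Rightarrow> 'w \<Rightarrow> real" where
  "Zmart r E B f f' f'' L L' L'' t \<omega> =
     (\<Sum>u\<in>alive E t \<omega>. exp (- r * t) * zeta E B f f' f'' L L' L'' u t \<omega>)"

definition growth :: "real \<Rightarrow> (real \<Rightarrow> real) \<Rightarrow> (real \<Rightarrow> real) \<Rightarrow> (real \<Rightarrow> real)
    \<Rightarrow> real \<Rightarrow> real" where
  "growth r f' L L' t = integral {0..t}
     (\<lambda>s. r - 1/2 * (f' s)\<^sup>2 - pi\<^sup>2 / (8 * (L s)\<^sup>2) + L' s / (2 * L s))"

definition Eerr :: "(real \<Rightarrow> real) \<Rightarrow> (real \<Rightarrow> real) \<Rightarrow> (real \<Rightarrow> real)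
    \<Rightarrow> (real \<Rightarrow> real) \<Rightarrow> (real \<Rightarrow> real) \<Rightarrow> real \<Rightarrow> real" where
  "Eerr f' f'' L L' L'' t = \<bar>f' t\<bar> * L t + integral {0..t} (\<lambda>s. \<bar>f'' s\<bar> * L s)
     + 1/2 * \<bar>L' t\<bar> * L t + 1/2 * integral {0..t} (\<lambda>s. \<bar>L'' s\<bar> * L s)"

definition Sconst :: "real \<Rightarrow> (real \<Rightarrow> real) \<Rightarrow> (real \<Rightarrow> real) \<Rightarrow> (real \<Rightarrow> real) \<Rightarrow> ereal" where
  "Sconst r f' L L' = Liminf at_top (\<lambda>t. ereal (growth r f' L L' t / t))"

end

theory Submission imports Defs begin

text \<open>Write I(t) for the integral of r - f'^2/2 - pi^2/(8 L^2) + L'/(2 L) over [0, t].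
  Along a path X that stays in the tube |X - f| < L up to time t, log G(t) exceeds r t - I(t)
  by at most E(t): integrating the stochastic integral by parts against f leaves only terms in
  X - f, each bounded by means of |X - f| < L. As the cosine is at most 1, every particle in the
  tube contributes at most exp(E(t) - I(t)) to Z(t) and all others contribute nothing, so
  Z(t) \<le> |N^(t)| exp(E(t) - I(t)) for every outcome; the argument is pathwise. Taking
  logarithms, E(t) = o(t) and S > 0 make a positive lower bound on Z(t) negligible against
  I(t).\<close>

lemma has_integral_product_derivative:
  fixes g h :: "real \<Rightarrow> real"
  assumes "a \<le> b"
    and "\<And>s. s \<in> {a..b} \<Longrightarrow> (g has_real_derivative g' s) (at s within {a..b})"
    and "\<And>s. s \<in> {a..b} \<Longrightarrow> (h has_real_derivative h' s) (at s within {a..b})"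
  shows "((\<lambda>s. g' s * h s + g s * h' s) has_integral g b * h b - g a * h a) {a..b}"
proof (rule fundamental_theorem_of_calculus[OF \<open>a \<le> b\<close>])
  fix s assume "s \<in> {a..b}"
  then show "((\<lambda>s. g s * h s) has_vector_derivative g' s * h s + g s * h' s) (at s within {a..b})"
    using DERIV_mult[OF assms(2,3)]
    by (auto simp: has_real_derivative_iff_has_vector_derivative algebra_simps)
qed

lemma abs_quadratic_le_in_tube:
  fixes c y l :: real
  assumes "0 < l" and "\<bar>y\<bar> \<le> l"
  shows "\<bar>c / (2 * l) * y\<^sup>2\<bar> \<le> 1/2 * \<bar>c\<bar> * l"
proof -
  have "y\<^sup>2 \<le> l\<^sup>2" using assms abs_le_square_iff[of y l] by simp
  then have "\<bar>c / (2 * l) * y\<^sup>2\<bar> \<le> \<bar>c\<bar> / (2 * l) * l\<^sup>2"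
    using assms by (auto simp: abs_mult intro!: mult_left_mono divide_right_mono)
  also have "\<dots> = 1/2 * \<bar>c\<bar> * l" using assms by (simp add: power2_eq_square)
  finally show ?thesis .
qed

lemma AE_nonneg_if_exponential_distributed:
  assumes "distributed M lborel X (\<lambda>x. ennreal (exponential_density r x))"
  shows "AE \<omega> in M. X \<omega> \<ge> 0"
proof (rule AE_distrD[where P = "\<lambda>x. x \<ge> 0"])
  show "X \<in> measurable M lborel" using assms by (simp add: distributed_def)
  have "AE x in density lborel (\<lambda>x. ennreal (exponential_density r x)). x \<ge> 0"
    by (subst AE_density) (auto simp: exponential_density_def)
  moreover have "distr M lborel X = density lborel (\<lambda>x. ennreal (exponential_density r x))"
    using assms by (simp add: distributed_def)
  ultimately show "AE x in distr M lborel X. x \<ge> 0"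
    by (simp only:)
qed

lemma continuous_on_pos:
  assumes "\<And>v. continuous_on {0..} (\<lambda>s. B v s \<omega>)" and "\<And>v. E v \<omega> \<ge> 0"
  shows "continuous_on S (\<lambda>s. pos E B u s \<omega>)"
  unfolding pos_def
proof (intro continuous_on_sum)
  fix j
  let ?v = "take j u"
  have "(\<lambda>s. min (E ?v \<omega>) (max 0 (s - born E ?v \<omega>))) ` S \<subseteq> {0..}"
    using assms(2)[of ?v] by auto
  then show "continuous_on S (\<lambda>s. B ?v (min (E ?v \<omega>) (max 0 (s - born E ?v \<omega>))) \<omega>)"
    by (intro continuous_on_compose2[OF assms(1)] continuous_intros)
qed

lemma tendsto_zero_div_if_linear_lower_bound:
  fixes a g :: "real \<Rightarrow> real"
  assumes "((\<lambda>t. a t / t) \<longlongrightarrow> 0) at_top"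
    and "e > 0" and "eventually (\<lambda>t. e * t < g t) at_top"
  shows "((\<lambda>t. a t / g t) \<longlongrightarrow> 0) at_top"
proof (rule Lim_null_comparison)
  show "((\<lambda>t. \<bar>a t / t\<bar> / e) \<longlongrightarrow> 0) at_top"
    using tendsto_divide[OF tendsto_rabs[OF assms(1)] tendsto_const[of e]] \<open>e > 0\<close> by simp
  show "eventually (\<lambda>t. norm (a t / g t) \<le> \<bar>a t / t\<bar> / e) at_top"
    using assms(3) eventually_gt_at_top[of 0]
  proof eventually_elim
    case (elim t)
    then have "0 < e * t" using \<open>e > 0\<close> by simp
    then have "\<bar>a t\<bar> / g t \<le> \<bar>a t\<bar> / (e * t)"
      using elim by (intro divide_left_mono) auto
    with elim \<open>0 < e * t\<close> show ?case by (simp add: mult.commute)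
  qed
qed

lemma Liminf_ge_if_eventually_ge_tendsto:
  fixes a b :: "'a \<Rightarrow> real"
  assumes "\<not> trivial_limit F" and "eventually (\<lambda>t. a t \<le> b t) F" and "(a \<longlongrightarrow> l) F"
  shows "ereal l \<le> Liminf F (\<lambda>t. ereal (b t))"
proof -
  have "Liminf F (\<lambda>t. ereal (a t)) = ereal l"
    using assms(1,3) by (intro lim_imp_Liminf) simp_all
  moreover have "Liminf F (\<lambda>t. ereal (a t)) \<le> Liminf F (\<lambda>t. ereal (b t))"
    using assms(2) by (intro Liminf_mono) simp
  ultimately show ?thesis by simp
qed

lemma Liminf_ln_div_ge_one_if_bounded:
  fixes Z N g e :: "real \<Rightarrow> real"
  assumes bound: "\<And>t. t \<ge> 0 \<Longrightarrow> Z t \<le> N t * exp (e t - g t)"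
    and e_small: "((\<lambda>t. e t / t) \<longlongrightarrow> 0) at_top"
    and g_pos: "Liminf at_top (\<lambda>t. ereal (g t / t)) > 0"
    and Z_pos: "Liminf at_top (\<lambda>t. ereal (Z t)) > 0"
  shows "Liminf at_top (\<lambda>t. ereal (ln (N t) / g t)) \<ge> 1"
proof -
  obtain c where "0 < c" and "ereal c < Liminf at_top (\<lambda>t. ereal (Z t))"
    using ereal_dense2[OF Z_pos] by (metis ereal_less(2))
  then have ev_Z: "eventually (\<lambda>t. c < Z t) at_top"
    using less_LiminfD by fastforce
  obtain d where "0 < d" and "ereal d < Liminf at_top (\<lambda>t. ereal (g t / t))"
    using ereal_dense2[OF g_pos] by (metis ereal_less(2))
  then have ev_g: "eventually (\<lambda>t. d * t < g t) at_top"
    using less_LiminfD[of d] eventually_gt_at_top[of 0]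
    by (fastforce elim: eventually_elim2 simp: pos_less_divide_eq mult.commute)
  have "eventually (\<lambda>t. 1 + (ln c - e t) / g t \<le> ln (N t) / g t) at_top"
    using ev_Z ev_g eventually_ge_at_top[of 1]
  proof eventually_elim
    case (elim t)
    then have g_t: "g t > 0" using \<open>d > 0\<close> by (smt (verit) mult_pos_pos)
    have c_lt: "c < N t * exp (e t - g t)" using elim bound[of t] by simp
    then have "N t > 0" using \<open>c > 0\<close> by (smt (verit) exp_gt_zero mult_nonpos_nonneg)
    have "ln c < ln (N t * exp (e t - g t))" using c_lt \<open>c > 0\<close> by simp
    also have "\<dots> = ln (N t) + e t - g t" using \<open>N t > 0\<close> by (simp add: ln_mult)
    finally have "g t + (ln c - e t) \<le> ln (N t)" by simp
    then have "(g t + (ln c - e t)) / g t \<le> ln (N t) / g t"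
      using g_t by (intro divide_right_mono) auto
    with g_t show ?case by (simp add: add_divide_distrib)
  qed
  moreover have "((\<lambda>t. (ln c - e t) / t) \<longlongrightarrow> 0) at_top"
    using tendsto_diff[OF tendsto_mult_right_zero[OF tendsto_inverse_0_at_top[OF filterlim_ident]]
        e_small, of "ln c"]
    by (simp add: divide_inverse left_diff_distrib)
  then have "((\<lambda>t. 1 + (ln c - e t) / g t) \<longlongrightarrow> 1 + 0) at_top"
    by (intro tendsto_add tendsto_const tendsto_zero_div_if_linear_lower_bound[OF _ \<open>d > 0\<close> ev_g])
  ultimately show ?thesis
    using Liminf_ge_if_eventually_ge_tendsto[OF trivial_limit_at_top_linorder]
    by (simp add: one_ereal_def)
qed

locale smooth_tube =
  fixes f f' f'' L L' L'' :: "real \<Rightarrow> real"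
  assumes f0: "f 0 = 0"
    and f_deriv: "\<And>s. s \<ge> 0 \<Longrightarrow> (f has_real_derivative f' s) (at s within {0..})"
    and f'_deriv: "\<And>s. s \<ge> 0 \<Longrightarrow> (f' has_real_derivative f'' s) (at s within {0..})"
    and f''_cont: "continuous_on {0..} f''"
    and L_pos: "\<And>s. s \<ge> 0 \<Longrightarrow> L s > 0"
    and L_deriv: "\<And>s. s \<ge> 0 \<Longrightarrow> (L has_real_derivative L' s) (at s within {0..})"
    and L'_deriv: "\<And>s. s \<ge> 0 \<Longrightarrow> (L' has_real_derivative L'' s) (at s within {0..})"
    and L''_cont: "continuous_on {0..} L''"
begin

lemma continuous_on_coefficients [continuous_intros]:
  assumes "S \<subseteq> {0..}"
  shows "continuous_on S f" "continuous_on S f'" "continuous_on S f''"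
    and "continuous_on S L" "continuous_on S L'" "continuous_on S L''"
proof -
  have "continuous_on {0..} f" "continuous_on {0..} f'"
    and "continuous_on {0..} L" "continuous_on {0..} L'"
    by (rule DERIV_continuous_on, rule f_deriv L_deriv f'_deriv L'_deriv, simp)+
  then show "continuous_on S f" "continuous_on S f'" "continuous_on S f''"
    and "continuous_on S L" "continuous_on S L'" "continuous_on S L''"
    using f''_cont L''_cont by (auto intro: continuous_on_subset[OF _ assms])
qed

lemma integral_f''_mult_f:
  assumes "t \<ge> 0"
  shows "integral {0..t} (\<lambda>s. f'' s * f s) = f' t * f t - integral {0..t} (\<lambda>s. (f' s)\<^sup>2)"
proof -
  have product_rule: "((\<lambda>s. f'' s * f s + f' s * f' s) has_integral f' t * f t) {0..t}"
    using has_integral_product_derivative[OF assms, of f' f'' f f'] f0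
      has_field_derivative_subset[OF f'_deriv] has_field_derivative_subset[OF f_deriv]
    by auto
  show ?thesis
    using integral_unique[OF product_rule]
    by (simp add: integral_add integrable_continuous_interval continuous_intros power2_eq_square)
qed

lemma growth_eq:
  assumes "t \<ge> 0"
  shows "growth r f' L L' t = r * t - 1/2 * integral {0..t} (\<lambda>s. (f' s)\<^sup>2)
      - integral {0..t} (\<lambda>s. pi\<^sup>2 / (8 * (L s)\<^sup>2)) + integral {0..t} (\<lambda>s. L' s / (2 * L s))"
  using assms L_pos unfolding growth_def
  by (simp add: integral_add integral_diff integrable_continuous_interval continuous_intros
      less_imp_neq[symmetric])

lemma log_weight_le_in_tube:
  fixes X :: "real \<Rightarrow> real"
  assumes t: "t \<ge> 0" and X: "continuous_on {0..t} X"
    and tube: "\<forall>s\<in>{0..t}. \<bar>X s - f s\<bar> < L s"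
  shows "(f' t * X t - integral {0..t} (\<lambda>s. f'' s * X s))
       - 1/2 * integral {0..t} (\<lambda>s. (f' s)\<^sup>2)
       + integral {0..t} (\<lambda>s. pi\<^sup>2 / (8 * (L s)\<^sup>2))
       + L' t / (2 * L t) * (X t - f t)\<^sup>2
       - integral {0..t} (\<lambda>s. L'' s / (2 * L s) * (X s - f s)\<^sup>2 + L' s / (2 * L s))
     \<le> r * t - growth r f' L L' t + Eerr f' f'' L L' L'' t"
proof -
  define Y where "Y s = X s - f s" for s
  have Y_le: "\<bar>Y s\<bar> \<le> L s" and L_s: "L s > 0" if "s \<in> {0..t}" for s
    using tube L_pos that by (auto simp: Y_def less_imp_le)
  have cont_Y: "continuous_on {0..t} Y"
    unfolding Y_def using X by (intro continuous_intros) auto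
  have L_nz: "\<forall>s\<in>{0..t}. L s \<noteq> 0" using L_s by force
  note integrable = integrable_continuous_interval continuous_intros X cont_Y L_nz
  have drift: "f' t * X t - integral {0..t} (\<lambda>s. f'' s * X s)
      = integral {0..t} (\<lambda>s. (f' s)\<^sup>2) + (f' t * Y t - integral {0..t} (\<lambda>s. f'' s * Y s))"
  proof -
    have "integral {0..t} (\<lambda>s. f'' s * X s)
        = integral {0..t} (\<lambda>s. f'' s * f s + f'' s * Y s)"
      by (simp add: Y_def algebra_simps)
    also have "\<dots> = integral {0..t} (\<lambda>s. f'' s * f s) + integral {0..t} (\<lambda>s. f'' s * Y s)"
      by (intro integral_add integrable) auto
    finally show ?thesis using integral_f''_mult_f[OF t] by (simp add: Y_def algebra_simps)
  qed
  have quadratic: "integral {0..t} (\<lambda>s. L'' s / (2 * L s) * (X s - f s)\<^sup>2 + L' s / (2 * L s))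
      = integral {0..t} (\<lambda>s. L'' s / (2 * L s) * (Y s)\<^sup>2) + integral {0..t} (\<lambda>s. L' s / (2 * L s))"
    unfolding Y_def by (intro integral_add integrable) (use L_nz in auto)
  have "\<bar>integral {0..t} (\<lambda>s. f'' s * Y s)\<bar> \<le> integral {0..t} (\<lambda>s. \<bar>f'' s\<bar> * L s)"
    by (intro integral_norm_bound_integral[where 'a = real, unfolded real_norm_def])
      (auto simp: integrable abs_mult Y_le mult_left_mono)
  moreover have "\<bar>integral {0..t} (\<lambda>s. L'' s / (2 * L s) * (Y s)\<^sup>2)\<bar>
      \<le> integral {0..t} (\<lambda>s. 1/2 * \<bar>L'' s\<bar> * L s)"
  proof (rule integral_norm_bound_integral[where 'a = real, unfolded real_norm_def])
    fix s assume "s \<in> {0..t}"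
    then show "\<bar>L'' s / (2 * L s) * (Y s)\<^sup>2\<bar> \<le> 1/2 * \<bar>L'' s\<bar> * L s"
      by (intro abs_quadratic_le_in_tube L_s Y_le)
  qed (auto simp: integrable)
  moreover have "L' t / (2 * L t) * (Y t)\<^sup>2 \<le> 1/2 * \<bar>L' t\<bar> * L t"
  proof (rule order_trans[OF abs_ge_self])
    show "\<bar>L' t / (2 * L t) * (Y t)\<^sup>2\<bar> \<le> 1/2 * \<bar>L' t\<bar> * L t"
      by (rule abs_quadratic_le_in_tube) (use t L_s Y_le in auto)
  qed
  moreover have "f' t * Y t \<le> \<bar>f' t\<bar> * L t"
  proof (rule order_trans[OF abs_ge_self])
    show "\<bar>f' t * Y t\<bar> \<le> \<bar>f' t\<bar> * L t"
      using Y_le[of t] t by (simp add: abs_mult mult_left_mono)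
  qed
  ultimately show ?thesis
    unfolding growth_eq[OF t] Eerr_def drift quadratic
    by (auto simp: Y_def integral_mult_right[symmetric] mult.assoc)
qed

lemma Zmart_le_card_tube_alive:
  assumes t: "t \<ge> 0" and paths: "\<And>u. continuous_on {0..t} (\<lambda>s. pos E B u s \<omega>)"
  shows "Zmart r E B f f' f'' L L' L'' t \<omega>
     \<le> real (card (tube_alive E B f L t \<omega>)) * exp (Eerr f' f'' L L' L'' t - growth r f' L L' t)"
proof (cases "finite (alive E t \<omega>)")
  case False \<comment> \<open>both sides are 0: sum and card of an infinite set\<close>
  then show ?thesis by (simp add: Zmart_def)
next
  case True
  let ?K = "exp (Eerr f' f'' L L' L'' t - growth r f' L L' t)"
  let ?in_tube = "\<lambda>u. \<forall>s\<in>{0..t}. \<bar>pos E B u s \<omega> - f s\<bar> < L s"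
  have "exp (- r * t) * zeta E B f f' f'' L L' L'' u t \<omega> \<le> (if ?in_tube u then ?K else 0)" for u
  proof (cases "?in_tube u")
    case in_tube: True
    let ?logG = "logG E B f f' f'' L L' L'' u t \<omega>"
    have "?logG \<le> r * t - growth r f' L L' t + Eerr f' f'' L L' L'' t"
      unfolding logG_def Let_def using log_weight_le_in_tube[OF t paths in_tube] .
    have "exp (- r * t) * zeta E B f f' f'' L L' L'' u t \<omega>
        = exp (- r * t) * exp ?logG * cos (pi / (2 * L t) * (pos E B u t \<omega> - f t))"
      using in_tube by (simp add: zeta_def)
    also have "\<dots> \<le> exp (- r * t) * exp ?logG"
      by (rule mult_left_le) auto
    also have "\<dots> \<le> ?K"
      using \<open>?logG \<le> _\<close> by (simp add: exp_add[symmetric])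
    finally show ?thesis using in_tube by simp
  qed (auto simp: zeta_def)
  then have "Zmart r E B f f' f'' L L' L'' t \<omega> \<le> (\<Sum>u\<in>alive E t \<omega>. if ?in_tube u then ?K else 0)"
    unfolding Zmart_def by (rule sum_mono)
  also have "\<dots> = real (card (tube_alive E B f L t \<omega>)) * ?K"
    using True by (simp add: sum.If_cases tube_alive_def Int_def)
  finally show ?thesis .
qed

end

theorem proposition2:
  fixes M :: "'w measure" and r :: real
    and E :: "bool list \<Rightarrow> 'w \<Rightarrow> real"
    and B :: "bool list \<Rightarrow> real \<Rightarrow> 'w \<Rightarrow> real"
    and f f' f'' L L' L'' :: "real \<Rightarrow> real"
  assumes M: "prob_space M"
    and r: "r > 0"
    and E_exp: "\<And>u. distributed M lborel (E u) (\<lambda>x. ennreal (exponential_density r x))"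
    and B_BM: "\<And>u. std_BM M (B u)"
    and indep: "prob_space.indep_sets M
       (\<lambda>(u, b). if b then gen_sigma M (\<lambda>_. E u) else gen_sigma M (B u)) UNIV"
    and f0: "f 0 = 0"
    and f_deriv: "\<And>s. s \<ge> 0 \<Longrightarrow> (f has_real_derivative f' s) (at s within {0..})"
    and f'_deriv: "\<And>s. s \<ge> 0 \<Longrightarrow> (f' has_real_derivative f'' s) (at s within {0..})"
    and f''_cont: "continuous_on {0..} f''"
    and L_pos: "\<And>s. s \<ge> 0 \<Longrightarrow> L s > 0"
    and L_deriv: "\<And>s. s \<ge> 0 \<Longrightarrow> (L has_real_derivative L' s) (at s within {0..})"
    and L'_deriv: "\<And>s. s \<ge> 0 \<Longrightarrow> (L' has_real_derivative L'' s) (at s within {0..})"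
    and L''_cont: "continuous_on {0..} L''"
    and E_small: "((\<lambda>t. Eerr f' f'' L L' L'' t / t) \<longlongrightarrow> 0) at_top"
    and S_fin: "Sconst r f' L L' < \<infinity>"
    and S_pos: "Sconst r f' L L' > 0"
  shows "AE \<omega> in M.
     Liminf at_top (\<lambda>t. ereal (Zmart r E B f f' f'' L L' L'' t \<omega>)) > 0 \<longrightarrow>
     Liminf at_top (\<lambda>t. ereal (ln (real (card (tube_alive E B f L t \<omega>)))
                                  / growth r f' L L' t)) \<ge> 1"
proof -
  interpret smooth_tube f f' f'' L L' L''
    using f0 f_deriv f'_deriv f''_cont L_pos L_deriv L'_deriv L''_cont by unfold_locales
  have "AE \<omega> in M. \<forall>u. E u \<omega> \<ge> 0"
    using AE_nonneg_if_exponential_distributed[OF E_exp] by (simp add: AE_all_countable)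
  then show ?thesis
    using AE_space
  proof eventually_elim
    case (elim \<omega>)
    then have paths: "continuous_on {0..t} (\<lambda>s. pos E B u s \<omega>)" for t u
      using B_BM by (intro continuous_on_pos) (auto simp: std_BM_def)
    have "Zmart r E B f f' f'' L L' L'' t \<omega>
        \<le> real (card (tube_alive E B f L t \<omega>)) * exp (Eerr f' f'' L L' L'' t - growth r f' L L' t)"
      if "t \<ge> 0" for t
      using that paths by (rule Zmart_le_card_tube_alive)
    from Liminf_ln_div_ge_one_if_bounded[OF this E_small] show ?case
      using S_pos unfolding Sconst_def by blast
  qed
qed

end
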